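(* Let $x_0\in\mathbb{R}$ and suppose $\displaystyle \lim_{n\to\infty}\frac{p_n(x_0)^2}{K_n(x_0,x_0)}=0$. Then $\limsup_{n\to\infty}K_n(x_0,x_0)^{1/n}\le1$, and in particular $\limsup_{n\to\infty}\big(p_n(x_0)^2+p_{n+1}(x_0)^2\big)^{1/n}\le1$.
   Context: Let $\rho$ be a probability measure on $\mathbb{R}$ with compact but infinite support, $p_n$ ($n\ge0$) its orthonormal polynomials (real coefficients, positive leading coefficient, $p_0=1$), and $K_n(x,y)=\sum_{j=0}^n p_j(x)p_j(y)$. *)

theory Defs
  imports "HOL-Analysis.Analysis" "HOL-Probability.Probability" "HOL-Computational_Algebra.Polynomial"
begin

definition measure_support :: "real measure \<Rightarrow> real set" where
  "measure_support \<mu> = {x. \<forall>U. open U \<longrightarrow> x \<in> U \<longrightarrow> emeasure \<mu> U > 0}"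

definition orthonormal_polys :: "real measure \<Rightarrow> (nat \<Rightarrow> real poly) \<Rightarrow> bool" where
  "orthonormal_polys \<mu> p \<longleftrightarrow>
     (\<forall>n. degree (p n) = n \<and> lead_coeff (p n) > 0) \<and>
     (\<forall>i j. (\<integral>x. poly (p i) x * poly (p j) x \<partial>\<mu>) = (if i = j then 1 else 0))"

definition CD_kernel :: "(nat \<Rightarrow> real poly) \<Rightarrow> nat \<Rightarrow> real \<Rightarrow> real \<Rightarrow> real" where
  "CD_kernel p n x y = (\<Sum>j\<le>n. poly (p j) x * poly (p j) y)"

end

theory Submission
  imports Defs
begin

(* Write K n = K_n(x0,x0).  Since K (n+1) = K n + p_{n+1}(x0)^2, the
   hypothesis says exactly that K n / K (n+1) = 1 - p_{n+1}(x0)^2 / K (n+1) tends to 1;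
   and K n \<ge> p_0(x0)^2 > 0 because p_0 is a nonzero constant.  A positive sequence whose
   consecutive ratios tend to 1 grows subexponentially: for each q > 1 it is eventually
   bounded by C q^n.  Subexponential growth of a nonnegative sequence b gives
   limsup b_n^{1/n} \<le> 1.  The second claim follows because
   p_n(x0)^2 + p_{n+1}(x0)^2 \<le> K (n+1), and subexponential growth is stable under
   shifting the index and under domination. *)

definition subexponential :: "(nat \<Rightarrow> real) \<Rightarrow> bool" where
  "subexponential b \<longleftrightarrow> (\<forall>q>1. \<exists>C. \<forall>\<^sub>F n in sequentially. b n \<le> C * q ^ n)"

text \<open>Ratio criterion: if consecutive ratios of a positive sequence tend to 1, then
  eventually each step grows by a factor at most q, whence geometric domination.\<close>
lemma subexponential_if_ratio_tendsto_1:
  fixes a :: "nat \<Rightarrow> real"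
  assumes pos: "\<And>n. a n > 0" and ratio: "(\<lambda>n. a n / a (Suc n)) \<longlonglongrightarrow> 1"
  shows "subexponential a"
  unfolding subexponential_def
proof (intro allI impI)
  fix q :: real assume q: "q > 1"
  have "1 / q < 1" using q by simp
  then obtain N where N: "\<And>n. n \<ge> N \<Longrightarrow> a n / a (Suc n) > 1 / q"
    using order_tendstoD(1)[OF ratio] by (auto simp: eventually_sequentially)
  have step: "a (Suc n) \<le> q * a n" if "n \<ge> N" for n
    using N[OF that] pos[of n] pos[of "Suc n"] q by (simp add: field_simps)
  have geometric: "a (N + k) \<le> a N * q ^ k" for k
  proof (induction k)
    case 0 then show ?case by simp
  next
    case (Suc k)
    have "a (N + Suc k) \<le> q * a (N + k)" using step[of "N + k"] by simp
    also have "\<dots> \<le> q * (a N * q ^ k)" using Suc q by simp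
    finally show ?case by (simp add: algebra_simps)
  qed
  have "a n \<le> a N / q ^ N * q ^ n" if "n \<ge> N" for n
  proof -
    obtain k where k: "n = N + k" using \<open>n \<ge> N\<close> le_Suc_ex by blast
    have "a n \<le> a N * q ^ k" using geometric k by simp
    also have "\<dots> = a N / q ^ N * q ^ n" using q by (simp add: k power_add)
    finally show ?thesis .
  qed
  then have "\<forall>\<^sub>F n in sequentially. a n \<le> a N / q ^ N * q ^ n"
    by (auto simp: eventually_sequentially)
  then show "\<exists>C. \<forall>\<^sub>F n in sequentially. a n \<le> C * q ^ n" by blast
qed

lemma subexponential_dominated:
  assumes "subexponential b" and "\<forall>\<^sub>F n in sequentially. a n \<le> b n"
  shows "subexponential a"
  unfolding subexponential_def
proof (intro allI impI)
  fix q :: real assume "q > 1"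
  then obtain C where "\<forall>\<^sub>F n in sequentially. b n \<le> C * q ^ n"
    using assms(1) unfolding subexponential_def by blast
  with assms(2) have "\<forall>\<^sub>F n in sequentially. a n \<le> C * q ^ n"
    by eventually_elim auto
  then show "\<exists>C. \<forall>\<^sub>F n in sequentially. a n \<le> C * q ^ n" by blast
qed

text \<open>Shifting the index by one only changes the constant by a factor q.\<close>
lemma subexponential_Suc:
  assumes "subexponential b"
  shows "subexponential (\<lambda>n. b (Suc n))"
  unfolding subexponential_def
proof (intro allI impI)
  fix q :: real assume "q > 1"
  then obtain C where "\<forall>\<^sub>F n in sequentially. b n \<le> C * q ^ n"
    using assms unfolding subexponential_def by blast
  then have "\<forall>\<^sub>F n in sequentially. b (Suc n) \<le> (C * q) * q ^ n"
    unfolding eventually_sequentially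
    by (metis (no_types, lifting) le_SucI mult.assoc power_Suc)
  then show "\<exists>C. \<forall>\<^sub>F n in sequentially. b (Suc n) \<le> C * q ^ n" by blast
qed

text \<open>Root test form: a nonnegative subexponential sequence has
  limsup b_n^{1/n} \<le> 1, since (C q^n)^{1/n} = C^{1/n} q \<rightarrow> q for every q > 1.\<close>
lemma limsup_root_le_1_if_subexponential:
  fixes b :: "nat \<Rightarrow> real"
  assumes nonneg: "\<And>n. b n \<ge> 0" and sub: "subexponential b"
  shows "limsup (\<lambda>n. ereal (b n powr (1 / real n))) \<le> 1"
  unfolding Limsup_le_iff
proof (intro allI impI)
  fix y :: ereal assume y: "y > 1"
  show "\<forall>\<^sub>F n in sequentially. y > ereal (b n powr (1 / real n))"
  proof (cases y)
    case PInf then show ?thesis by simp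
  next
    case MInf then show ?thesis using y by simp
  next
    case (real r)
    with y have r: "r > 1" by simp
    define q where "q = (1 + r) / 2"
    have q1: "q > 1" and qr: "q < r" using r by (auto simp: q_def)
    obtain C0 where bound0: "\<forall>\<^sub>F n in sequentially. b n \<le> C0 * q ^ n"
      using sub q1 unfolding subexponential_def by blast
    define C where "C = max C0 1"
    have "C0 * q ^ n \<le> C * q ^ n" for n
      using q1 by (intro mult_right_mono) (auto simp: C_def)
    then have bound: "\<forall>\<^sub>F n in sequentially. b n \<le> C * q ^ n"
      using bound0 by (auto elim!: eventually_mono intro: order.trans)
    have C: "C > 0" by (simp add: C_def)
    have "(\<lambda>n. C powr (1 / real n)) \<longlonglongrightarrow> C powr 0"
      by (intro tendsto_powr tendsto_const lim_1_over_n) (use C in auto)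
    then have "(\<lambda>n. C powr (1 / real n)) \<longlonglongrightarrow> 1" using C by simp
    moreover have "r / q > 1" using qr q1 by simp
    ultimately have small: "\<forall>\<^sub>F n in sequentially. C powr (1 / real n) < r / q"
      using order_tendstoD(2) by blast
    from bound small eventually_ge_at_top[of 1] show ?thesis
    proof eventually_elim
      case (elim n)
      have "b n powr (1 / real n) \<le> (C * q ^ n) powr (1 / real n)"
        by (rule powr_mono2) (use nonneg elim in auto)
      also have "\<dots> = C powr (1 / real n) * q"
        using C q1 elim by (simp add: powr_mult powr_realpow[symmetric] powr_powr)
      also have "\<dots> < r / q * q"
        using elim q1 by (intro mult_strict_right_mono) auto
      also have "r / q * q = r" using q1 by simp
      finally show ?case using real by simp
    qed
  qed
qed

lemma CD_kernel_diag_Suc: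
  "CD_kernel p (Suc n) x x = CD_kernel p n x x + (poly (p (Suc n)) x)\<^sup>2"
  by (simp add: CD_kernel_def power2_eq_square)

lemma square_le_CD_kernel_diag:
  assumes "j \<le> n"
  shows "(poly (p j) x)\<^sup>2 \<le> CD_kernel p n x x"
  unfolding CD_kernel_def power2_eq_square
  by (rule member_le_sum) (use assms in auto)

lemma consecutive_squares_le_CD_kernel_diag:
  "(poly (p n) x)\<^sup>2 + (poly (p (Suc n)) x)\<^sup>2 \<le> CD_kernel p (Suc n) x x"
  using square_le_CD_kernel_diag[of n n p x] by (simp add: CD_kernel_diag_Suc)

text \<open>The polynomial of degree 0 with positive leading coefficient is a positive
  constant, so the kernel diagonal is strictly positive everywhere.\<close>
lemma CD_kernel_diag_pos:
  assumes "degree (p 0) = 0" and "lead_coeff (p 0) > 0"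
  shows "CD_kernel p n x x > 0"
proof -
  have "poly (p 0) x = lead_coeff (p 0)"
    using assms(1) by (metis degree_0_id poly_pCons poly_0 mult_zero_right add.right_neutral)
  then have "(poly (p 0) x)\<^sup>2 > 0" using assms(2) by (simp add: power2_eq_square)
  then show ?thesis using square_le_CD_kernel_diag[of 0 n p x] by linarith
qed

text \<open>Since K (n+1) - K n = p_{n+1}(x)^2, the hypothesis p_n(x)^2 / K n \<rightarrow> 0 says
  exactly that consecutive kernel ratios tend to 1.\<close>
lemma CD_kernel_diag_ratio_tendsto_1:
  assumes pos: "\<And>n. CD_kernel p n x x > 0"
    and lim: "(\<lambda>n. (poly (p n) x)\<^sup>2 / CD_kernel p n x x) \<longlonglongrightarrow> 0"
  shows "(\<lambda>n. CD_kernel p n x x / CD_kernel p (Suc n) x x) \<longlonglongrightarrow> 1"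
proof -
  have "(\<lambda>n. 1 - (poly (p (Suc n)) x)\<^sup>2 / CD_kernel p (Suc n) x x) \<longlonglongrightarrow> 1 - 0"
    using lim[THEN LIMSEQ_Suc] by (intro tendsto_diff tendsto_const)
  moreover have "1 - (poly (p (Suc n)) x)\<^sup>2 / CD_kernel p (Suc n) x x
                 = CD_kernel p n x x / CD_kernel p (Suc n) x x" for n
    using pos[of "Suc n"] by (simp add: CD_kernel_diag_Suc field_simps)
  ultimately show ?thesis by simp
qed

theorem proposition3p1:
  fixes \<mu> :: "real measure" and p :: "nat \<Rightarrow> real poly" and x0 :: real
  assumes "prob_space \<mu>"
    and "sets \<mu> = sets borel"
    and "compact (measure_support \<mu>)"
    and "infinite (measure_support \<mu>)"
    and "orthonormal_polys \<mu> p"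
    and "(\<lambda>n. (poly (p n) x0)\<^sup>2 / CD_kernel p n x0 x0) \<longlonglongrightarrow> 0"
  shows "limsup (\<lambda>n. ereal (CD_kernel p n x0 x0 powr (1 / real n))) \<le> 1
         \<and> limsup (\<lambda>n. ereal (((poly (p n) x0)\<^sup>2 + (poly (p (Suc n)) x0)\<^sup>2) powr (1 / real n))) \<le> 1"
proof -
  have "degree (p 0) = 0" and "lead_coeff (p 0) > 0"
    using assms(5) unfolding orthonormal_polys_def by blast+
  then have pos: "\<And>n. CD_kernel p n x0 x0 > 0" by (rule CD_kernel_diag_pos)
  have sub: "subexponential (\<lambda>n. CD_kernel p n x0 x0)"
    using pos CD_kernel_diag_ratio_tendsto_1[OF pos assms(6)]
    by (rule subexponential_if_ratio_tendsto_1)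
  have "subexponential (\<lambda>n. (poly (p n) x0)\<^sup>2 + (poly (p (Suc n)) x0)\<^sup>2)"
    using subexponential_Suc[OF sub]
    by (rule subexponential_dominated) (simp add: consecutive_squares_le_CD_kernel_diag)
  then show ?thesis
    using sub pos by (simp add: limsup_root_le_1_if_subexponential less_imp_le)
qed

end
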